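(* Let $u,v\in\{0,1,2\}^*$ with $\theta(u),\theta(v)\in\{0,1,\dots,7\}$. If $\theta(u)=\theta(v)$, then $\lambda_{ua}=\lambda_{va}$ and $s_{ua}=s_{va}$ for every $a\in\{0,1,2\}$.
   Context: Fibonacci numbers: $F_0=1$, $F_1=2$, $F_n=F_{n-1}+F_{n-2}$ for $n\ge2$ (so $F_2=3$). For a word $w=w_{k-1}\cdots w_0$ over $\{0,1,2\}$ (digits indexed from the right), $\mathrm{val}_{\mathcal{F}}(w)=\sum_{i=0}^{k-1}w_iF_i$. $\mathcal{S}=\{000,001,010,100,101\}$. Let $u\mapsto w_u\in\{0,1\}^*$ (length-preserving) and $u\mapsto s_u\in\mathcal{S}$ be the unique maps on $\{0,1,2\}^*$ such that $w_u$ is a prefix of $w_{ua}$ for every letter $a\in\{0,1,2\}$ and $\mathrm{val}_{\mathcal{F}}(u)=\mathrm{val}_{\mathcal{F}}(w_us_u)$ for all $u$; and let $\lambda_{ua}\in\{0,1\}$ be defined by $w_{ua}=w_u\lambda_{ua}$. Define $\theta:\{0,1,2\}^*\to\mathbb{Z}$ by $\theta(\varepsilon)=0$ and $\theta(ua)=\mathrm{val}_{\mathcal{F}}(s_u)+\mathrm{val}_{\mathcal{F}}(s_{ua})-F_2\lambda_{ua}+a$ for $u\in\{0,1,2\}^*$, $a\in\{0,1,2\}$. *)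

theory Defs
  imports Main "HOL-Library.Sublist"
begin

fun fibF :: "nat \<Rightarrow> nat" where
  "fibF 0 = 1"
| "fibF (Suc 0) = 2"
| "fibF (Suc (Suc n)) = fibF (Suc n) + fibF n"

text \<open>Words are lists written left to right, w = w_{k-1} ... w_0, so the
  digit w_i is the i-th element of the reversed list.\<close>
definition valF :: "nat list \<Rightarrow> nat" where
  "valF w = (\<Sum>i<length w. rev w ! i * fibF i)"

definition words3 :: "nat list set" where
  "words3 = {u. set u \<subseteq> {0,1,2}}"

definition Sset :: "nat list set" where
  "Sset = {[0,0,0],[0,0,1],[0,1,0],[1,0,0],[1,0,1]}"

definition ws_spec :: "(nat list \<Rightarrow> nat list) \<Rightarrow> (nat list \<Rightarrow> nat list) \<Rightarrow> bool" where
  "ws_spec W Sm \<longleftrightarrow>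
     (\<forall>u\<in>words3. set (W u) \<subseteq> {0,1} \<and> length (W u) = length u \<and> Sm u \<in> Sset
        \<and> valF u = valF (W u @ Sm u)
        \<and> (\<forall>a\<in>{0,1,2}. prefix (W u) (W (u @ [a]))))"

text \<open>The unique such maps (fixed to default values outside {0,1,2}^* so that
  the description is unique).\<close>
definition WS :: "(nat list \<Rightarrow> nat list) \<times> (nat list \<Rightarrow> nat list)" where
  "WS = (THE p. ws_spec (fst p) (snd p)
              \<and> (\<forall>u. u \<notin> words3 \<longrightarrow> fst p u = [] \<and> snd p u = [0,0,0]))"

definition wmap :: "nat list \<Rightarrow> nat list" where "wmap = fst WS"
definition smap :: "nat list \<Rightarrow> nat list" where "smap = snd WS"

definition lam :: "nat list \<Rightarrow> nat" where
  "lam u = last (wmap u)"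

definition theta :: "nat list \<Rightarrow> int" where
  "theta u = (if u = [] then 0 else
     int (valF (smap (butlast u))) + int (valF (smap u))
       - int (fibF 2) * int (lam u) + int (last u))"

end

theory Submission
  imports Defs
begin

text \<open>Write \<open>V\<^sub>k(w) = \<Sum> w\<^sub>i F\<^sub>i\<^sub>+\<^sub>k\<close>. If
  \<open>val(u) = V\<^sub>3(w\<^sub>u) + val(s\<^sub>u)\<close>, then \<open>val(ua) = a + V\<^sub>1(u)\<close> forces
  \<open>5 \<lambda>\<^sub>u\<^sub>a + val(s\<^sub>u\<^sub>a) = a + c(u)\<close> with the carry
  \<open>c(u) = V\<^sub>1(u) - V\<^sub>4(w\<^sub>u)\<close>. As val maps \<open>\<S>\<close> bijectively onto {0,...,4},
  \<open>\<lambda>\<^sub>u\<^sub>a\<close> and \<open>s\<^sub>u\<^sub>a\<close> are the quotient and remainder of \<open>a + c(u)\<close>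
  by 5, and the Fibonacci recurrence shows \<open>c(u) = \<theta>(u)\<close>. The same identity makes the maps unique. They exist
  because the resulting carry transducer only visits states \<open>(val(s), c)\<close> with
  \<open>0 \<le> c \<le> 7\<close>, so that the emitted digits \<open>\<lfloor>(c + a) / 5\<rfloor>\<close> are binary.\<close>

definition valF_shift :: "nat \<Rightarrow> nat list \<Rightarrow> nat" where
  "valF_shift k w = (\<Sum>i<length w. rev w ! i * fibF (i + k))"

lemma valF_shift_Nil [simp]: "valF_shift k [] = 0"
  by (simp add: valF_shift_def)

lemma valF_shift_snoc: "valF_shift k (w @ [a]) = a * fibF k + valF_shift (Suc k) w"
  unfolding valF_shift_def by (simp del: sum.lessThan_Suc add: sum.lessThan_Suc_shift)

lemma valF_shift_Suc_Suc: "valF_shift (Suc (Suc k)) w = valF_shift (Suc k) w + valF_shift k w"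
  unfolding valF_shift_def by (simp add: sum.distrib[symmetric] algebra_simps)

lemma valF_shift_append: "valF_shift k (w @ ys) = valF_shift (k + length ys) w + valF_shift k ys"
proof (induction ys arbitrary: k rule: rev_induct)
  case (snoc y ys)
  then show ?case
    using valF_shift_snoc[of k "w @ ys" y] by (simp add: valF_shift_snoc)
qed simp

lemma valF_eq_valF_shift: "valF w = valF_shift 0 w"
  by (simp add: valF_def valF_shift_def)

lemma fibF_numerals: "fibF 2 = 3" "fibF 3 = 5" "fibF 4 = 8"
  by (simp_all add: eval_nat_numeral)

lemma div_mod_decomp_unique:
  fixes b q q' m m' :: nat
  assumes "m < b" "m' < b" "b * q + m = b * q' + m'"
  shows "q = q' \<and> m = m'"
proof -
  have "(b * q + m) div b = (b * q' + m') div b" "(b * q + m) mod b = (b * q' + m') mod b"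
    using assms(3) by simp_all
  then show ?thesis
    using assms(1,2) by simp
qed

definition sdigits :: "nat \<Rightarrow> nat list" where
  "sdigits n = [[0,0,0],[0,0,1],[0,1,0],[1,0,0],[1,0,1]] ! n"

lemma valF_sdigits: "n \<le> 4 \<Longrightarrow> valF (sdigits n) = n"
  by (auto simp: le_Suc_eq numeral_eq_Suc sdigits_def valF_def)

lemma sdigits_in_Sset: "n \<le> 4 \<Longrightarrow> sdigits n \<in> Sset"
  by (auto simp: le_Suc_eq numeral_eq_Suc sdigits_def Sset_def)

lemma Sset_valF: "s \<in> Sset \<Longrightarrow> valF s \<le> 4 \<and> sdigits (valF s) = s \<and> length s = 3"
  by (auto simp: Sset_def sdigits_def valF_def eval_nat_numeral)

lemma Sset_digit_unique:
  assumes "s \<in> Sset" "s' \<in> Sset" "5 * l + valF s = 5 * l' + valF s'"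
  shows "l = l' \<and> s = s'"
proof -
  have "valF s < 5" "valF s' < 5"
    using Sset_valF[OF assms(1)] Sset_valF[OF assms(2)] by auto
  then have "l = l' \<and> valF s = valF s'"
    by (rule div_mod_decomp_unique[OF _ _ assms(3)])
  then show ?thesis
    using assms(1,2) Sset_valF by metis
qed

lemma valF_append_Sset: "s \<in> Sset \<Longrightarrow> valF (w @ s) = valF_shift 3 w + valF s"
  using Sset_valF by (simp add: valF_eq_valF_shift valF_shift_append)

lemma words3_snoc: "u @ [a] \<in> words3 \<longleftrightarrow> u \<in> words3 \<and> a \<in> {0,1,2}"
  by (auto simp: words3_def)

lemma ws_spec_valF:
  "ws_spec W S \<Longrightarrow> u \<in> words3 \<Longrightarrow> valF u = valF_shift 3 (W u) + valF (S u)"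
  by (simp add: ws_spec_def valF_append_Sset)

lemma ws_spec_Nil:
  assumes "ws_spec W S"
  shows "W [] = [] \<and> S [] = [0,0,0]"
proof -
  have "[] \<in> words3"
    by (simp add: words3_def)
  then have W: "W [] = []" and S: "S [] \<in> Sset" and "valF (W [] @ S []) = valF []"
    using assms by (auto simp: ws_spec_def)
  then have "valF (S []) = 0"
    by (simp add: valF_def)
  then have "S [] = sdigits 0"
    using S Sset_valF by metis
  then show ?thesis
    using W by (simp add: sdigits_def)
qed

lemma ws_spec_snoc:
  assumes spec: "ws_spec W S" and u: "u \<in> words3" and a: "a \<in> {0,1,2}"
  obtains l where "l \<le> 1" "W (u @ [a]) = W u @ [l]"
    "5 * l + valF (S (u @ [a])) + valF_shift 4 (W u) = a + valF_shift 1 u"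
proof -
  have ua: "u @ [a] \<in> words3"
    using u a by (simp add: words3_snoc)
  obtain zs where zs: "W (u @ [a]) = W u @ zs"
    using spec u a by (auto simp: ws_spec_def prefix_def)
  moreover have "length (W (u @ [a])) = Suc (length (W u))"
    using spec u ua unfolding ws_spec_def by simp
  ultimately have "length zs = 1"
    by simp
  with zs obtain l where l: "W (u @ [a]) = W u @ [l]"
    by (auto simp: length_Suc_conv)
  have "l \<le> 1"
    using spec ua l by (auto simp: ws_spec_def)
  moreover have "5 * l + valF (S (u @ [a])) + valF_shift 4 (W u) = a + valF_shift 1 u"
    using ws_spec_valF[OF spec ua] l
    by (simp add: valF_eq_valF_shift valF_shift_snoc fibF_numerals eval_nat_numeral)
  ultimately show ?thesis
    using l that by blast
qed

lemma ws_spec_unique: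
  assumes "ws_spec W S" "ws_spec W' S'"
  shows "u \<in> words3 \<Longrightarrow> W u = W' u \<and> S u = S' u"
proof (induction u rule: rev_induct)
  case Nil
  show ?case
    using ws_spec_Nil assms by metis
next
  case (snoc a u)
  then have u: "u \<in> words3" and a: "a \<in> {0,1,2}"
    by (simp_all add: words3_snoc)
  have W_eq: "W u = W' u"
    using snoc.IH u by simp
  obtain l where l: "W (u @ [a]) = W u @ [l]"
    "5 * l + valF (S (u @ [a])) + valF_shift 4 (W u) = a + valF_shift 1 u"
    using ws_spec_snoc[OF assms(1) u a] by blast
  obtain l' where l': "W' (u @ [a]) = W' u @ [l']"
    "5 * l' + valF (S' (u @ [a])) + valF_shift 4 (W' u) = a + valF_shift 1 u"
    using ws_spec_snoc[OF assms(2) u a] by blast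
  have "S (u @ [a]) \<in> Sset" "S' (u @ [a]) \<in> Sset"
    using assms snoc.prems by (auto simp: ws_spec_def)
  moreover have "5 * l + valF (S (u @ [a])) = 5 * l' + valF (S' (u @ [a]))"
    using l(2) l'(2) unfolding W_eq by linarith
  ultimately have "l = l' \<and> S (u @ [a]) = S' (u @ [a])"
    by (rule Sset_digit_unique)
  then show ?case
    using l(1) l'(1) W_eq by simp
qed

text \<open>A state \<open>(w, r, c)\<close> holds the binary prefix w, the value r of the current suffix in
  \<open>\<S>\<close> and the carry c.\<close>

fun carry_step :: "nat list \<times> nat \<times> int \<Rightarrow> nat \<Rightarrow> nat list \<times> nat \<times> int" where
  "carry_step (w, r, c) a =
     (let l = nat ((c + int a) div 5); r' = nat ((c + int a) mod 5)
      in (w @ [l], r', int r + int r' + int a - 3 * int l))"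

definition carry_run :: "nat list \<Rightarrow> nat list \<times> nat \<times> int" where
  "carry_run u = foldl carry_step ([], 0, 0) u"

text \<open>The pairs \<open>(r, c)\<close> reachable from \<open>(0, 0)\<close>.\<close>

definition carry_states :: "(nat \<times> int) set" where
  "carry_states = {(0,0),(0,1),(1,1),(1,2),(2,3),(2,4),(3,5),(3,6),(4,6),(4,7)}"

lemma carry_step_carry_states:
  assumes "(r, c) \<in> carry_states" "a \<in> {0,1,2}"
  shows "carry_step (w, r, c) a = (w @ [l], r', c') \<Longrightarrow> (r', c') \<in> carry_states \<and> l \<le> 1"
  using assms unfolding carry_states_def by (elim insertE emptyE) (auto simp: Let_def)

lemma carry_run_invariant:
  assumes "u \<in> words3" "carry_run u = (w, r, c)"
  shows "length w = length u \<and> set w \<subseteq> {0,1} \<and> (r, c) \<in> carry_states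
    \<and> valF_shift 0 u = valF_shift 3 w + r
    \<and> c = int (valF_shift 1 u) - int (valF_shift 4 w)"
  using assms
proof (induction u arbitrary: w r c rule: rev_induct)
  case Nil
  then show ?case
    by (simp add: carry_run_def carry_states_def)
next
  case (snoc a u)
  then have u: "u \<in> words3" and a: "a \<in> {0,1,2}"
    by (simp_all add: words3_snoc)
  obtain w0 r0 c0 where run: "carry_run u = (w0, r0, c0)"
    by (cases "carry_run u") auto
  note IH = snoc.IH[OF u run]
  define l where "l = nat ((c0 + int a) div 5)"
  define r' where "r' = nat ((c0 + int a) mod 5)"
  have "carry_step (w0, r0, c0) a = (w0 @ [l], r', int r0 + int r' + int a - 3 * int l)"
    by (simp only: carry_step.simps Let_def l_def r'_def)
  moreover have step: "carry_step (w0, r0, c0) a = (w, r, c)"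
    using snoc.prems(2) run by (simp add: carry_run_def del: carry_step.simps)
  ultimately have w: "w = w0 @ [l]" and r: "r = r'" and c: "c = int r0 + int r' + int a - 3 * int l"
    by simp_all
  have states: "(r, c) \<in> carry_states" and "l \<le> 1"
    using carry_step_carry_states[OF _ a step[unfolded w]] IH by auto
  have "0 \<le> c0"
    using IH by (auto simp: carry_states_def)
  then have div_mod: "int (5 * l + r') = c0 + int a"
    by (simp add: l_def r'_def pos_imp_zdiv_nonneg_iff)
  have "valF_shift 0 (u @ [a]) = valF_shift 3 w + r"
    using IH div_mod
    by (simp add: w r valF_shift_snoc fibF_numerals eval_nat_numeral)
  moreover have "c = int (valF_shift 1 (u @ [a])) - int (valF_shift 4 w)"
    using IH div_mod valF_shift_Suc_Suc[of 0 u] valF_shift_Suc_Suc[of 3 w0]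
    by (simp add: c w valF_shift_snoc fibF_numerals eval_nat_numeral)
  ultimately show ?case
    using IH states \<open>l \<le> 1\<close> w by auto
qed

lemma ws_spec_carry_run: "ws_spec (\<lambda>u. fst (carry_run u)) (\<lambda>u. sdigits (fst (snd (carry_run u))))"
  unfolding ws_spec_def
proof (intro ballI conjI)
  fix u assume u: "u \<in> words3"
  obtain w r c where run: "carry_run u = (w, r, c)"
    by (cases "carry_run u") auto
  note inv = carry_run_invariant[OF u run]
  have "r \<le> 4"
    using inv by (auto simp: carry_states_def)
  then have S: "sdigits r \<in> Sset" "valF (sdigits r) = r"
    by (simp_all add: sdigits_in_Sset valF_sdigits)
  then show "sdigits (fst (snd (carry_run u))) \<in> Sset"
    and "valF u = valF (fst (carry_run u) @ sdigits (fst (snd (carry_run u))))"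
    using inv valF_eq_valF_shift[of u] by (simp_all add: run valF_append_Sset)
  show "set (fst (carry_run u)) \<subseteq> {0,1}" "length (fst (carry_run u)) = length u"
    using inv by (simp_all add: run)
  fix a :: nat
  show "prefix (fst (carry_run u)) (fst (carry_run (u @ [a])))"
    by (simp add: carry_run_def run[unfolded carry_run_def] Let_def)
qed

lemma ws_spec_wmap_smap: "ws_spec wmap smap"
proof -
  define P where "P p \<longleftrightarrow> ws_spec (fst p) (snd p)
    \<and> (\<forall>u. u \<notin> words3 \<longrightarrow> fst p u = [] \<and> snd p u = [0,0,0])" for p
  define W where "W u = (if u \<in> words3 then fst (carry_run u) else [])" for u
  define S where "S u = (if u \<in> words3 then sdigits (fst (snd (carry_run u))) else [0,0,0])" for u
  have "P (W, S)"
    using ws_spec_carry_run by (auto simp: P_def W_def S_def ws_spec_def words3_snoc)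
  moreover have "p = (W, S)" if "P p" for p
  proof -
    have "fst p u = W u \<and> snd p u = S u" for u
      using that \<open>P (W, S)\<close> ws_spec_unique[of "fst p" "snd p" W S u]
      by (cases "u \<in> words3") (auto simp: P_def W_def S_def)
    then show ?thesis
      by (simp add: prod_eq_iff fun_eq_iff)
  qed
  ultimately have "P WS"
    unfolding WS_def P_def[symmetric] by (rule theI)
  then show ?thesis
    by (simp add: P_def wmap_def smap_def)
qed

lemma lam_snoc:
  assumes "u \<in> words3" "a \<in> {0,1,2}"
  shows "wmap (u @ [a]) = wmap u @ [lam (u @ [a])]"
    and "5 * lam (u @ [a]) + valF (smap (u @ [a])) + valF_shift 4 (wmap u) = a + valF_shift 1 u"
proof -
  obtain l where "wmap (u @ [a]) = wmap u @ [l]"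
    "5 * l + valF (smap (u @ [a])) + valF_shift 4 (wmap u) = a + valF_shift 1 u"
    using ws_spec_snoc[OF ws_spec_wmap_smap assms] .
  then show "wmap (u @ [a]) = wmap u @ [lam (u @ [a])]"
    and "5 * lam (u @ [a]) + valF (smap (u @ [a])) + valF_shift 4 (wmap u) = a + valF_shift 1 u"
    by (simp_all add: lam_def)
qed

lemma theta_eq_carry:
  assumes "u \<in> words3"
  shows "theta u = int (valF_shift 1 u) - int (valF_shift 4 (wmap u))"
proof (cases u rule: rev_exhaust)
  case Nil
  then show ?thesis
    using ws_spec_Nil[OF ws_spec_wmap_smap] by (simp add: theta_def)
next
  case (snoc u' a)
  then have u: "u' \<in> words3" and a: "a \<in> {0,1,2}"
    using assms by (simp_all add: words3_snoc)
  note W = lam_snoc(1)[OF u a] and digits = lam_snoc(2)[OF u a]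
  have "valF_shift 0 u' = valF_shift 3 (wmap u') + valF (smap u')"
    using ws_spec_valF[OF ws_spec_wmap_smap u] by (simp add: valF_eq_valF_shift)
  then show ?thesis
    using digits valF_shift_Suc_Suc[of 0 u'] valF_shift_Suc_Suc[of 3 "wmap u'"]
    by (simp add: theta_def snoc W valF_shift_snoc fibF_numerals eval_nat_numeral)
qed

lemma lam_smap_snoc_eq_theta:
  assumes "u \<in> words3" "a \<in> {0,1,2}"
  shows "int (5 * lam (u @ [a]) + valF (smap (u @ [a]))) = theta u + int a"
  using lam_snoc(2)[OF assms] theta_eq_carry[OF assms(1)] by linarith

theorem lemma5p6:
  assumes "u \<in> words3" and "v \<in> words3"
    and "theta u \<in> {0..7}" and "theta v \<in> {0..7}"
    and "theta u = theta v"
  shows "\<forall>a\<in>{0,1,2::nat}. lam (u @ [a]) = lam (v @ [a]) \<and> smap (u @ [a]) = smap (v @ [a])"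
proof
  fix a :: nat assume a: "a \<in> {0,1,2}"
  have smap_Sset: "smap (u @ [a]) \<in> Sset" "smap (v @ [a]) \<in> Sset"
    using ws_spec_wmap_smap assms(1,2) a by (auto simp: ws_spec_def words3_snoc)
  have "5 * lam (u @ [a]) + valF (smap (u @ [a])) = 5 * lam (v @ [a]) + valF (smap (v @ [a]))"
    using lam_smap_snoc_eq_theta[OF assms(1) a] lam_smap_snoc_eq_theta[OF assms(2) a] assms(5) by linarith
  then show "lam (u @ [a]) = lam (v @ [a]) \<and> smap (u @ [a]) = smap (v @ [a])"
    by (rule Sset_digit_unique[OF smap_Sset])
qed

end
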